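(* Let $f\in\mathcal{H}^2_{\omega}$ and, for $k\geq1$ and $\lambda\in\mathbb{C}$, $g_{k,\lambda}(z)=z^k+\lambda$. Then $f$ is $\mathcal{H}^2_{\omega}$-inner if and only if for every integer $k\geq 1$ there exist constants $C_k,D_k$ such that $$D_k+|\lambda|^2\leq\|fg_{k,\lambda}\|^2\leq C_k+|\lambda|^2\quad\text{for all }\lambda\in\mathbb{C}.$$
   Context: Let $\omega=\{\omega_n\}_{n\geq 0}$ be a sequence of positive reals with $\omega_0=1$ and $\lim_{n\to\infty}\omega_{n+1}/\omega_n=1$. $\mathcal{H}^2_{\omega}$ is the Hilbert space of power series $f(z)=\sum_{n\ge0}a_nz^n$ with $\|f\|^2=\sum_{n\geq0}\omega_n|a_n|^2<\infty$ and inner product $\langle f,g\rangle=\sum_n\omega_na_n\overline{b_n}$ for $g=\sum b_nz^n$. A function $f\in\mathcal{H}^2_{\omega}$ is $\mathcal{H}^2_{\omega}$-inner if $\|f\|=1$ and $\langle z^mf,f\rangle=0$ for all integers $m\geq1$. *)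

theory Defs
  imports "HOL-Analysis.Analysis" "HOL-Computational_Algebra.Formal_Power_Series"
begin

definition admissible_weight :: "(nat \<Rightarrow> real) \<Rightarrow> bool" where
  "admissible_weight \<omega> \<longleftrightarrow> \<omega> 0 = 1 \<and> (\<forall>n. \<omega> n > 0) \<and>
     (\<lambda>n. \<omega> (Suc n) / \<omega> n) \<longlonglongrightarrow> 1"

definition in_H2w :: "(nat \<Rightarrow> real) \<Rightarrow> complex fps \<Rightarrow> bool" where
  "in_H2w \<omega> f \<longleftrightarrow> summable (\<lambda>n. \<omega> n * (cmod (fps_nth f n))\<^sup>2)"

definition H2w_inner :: "(nat \<Rightarrow> real) \<Rightarrow> complex fps \<Rightarrow> complex fps \<Rightarrow> complex" where
  "H2w_inner \<omega> f g = (\<Sum>n. complex_of_real (\<omega> n) * fps_nth f n * cnj (fps_nth g n))"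

definition H2w_norm :: "(nat \<Rightarrow> real) \<Rightarrow> complex fps \<Rightarrow> real" where
  "H2w_norm \<omega> f = sqrt (\<Sum>n. \<omega> n * (cmod (fps_nth f n))\<^sup>2)"

definition H2w_inner_fn :: "(nat \<Rightarrow> real) \<Rightarrow> complex fps \<Rightarrow> bool" where
  "H2w_inner_fn \<omega> f \<longleftrightarrow> H2w_norm \<omega> f = 1 \<and>
     (\<forall>m::nat. m \<ge> 1 \<longrightarrow> H2w_inner \<omega> (fps_X ^ m * f) f = 0)"

end

theory Submission
  imports Defs
begin

text \<open>
  For \<open>k \<ge> 1\<close> the norm of \<open>f (z\<^sup>k + \<lambda>)\<close> expands as
  \<open>\<parallel>f (z\<^sup>k + \<lambda>)\<parallel>\<^sup>2 = \<parallel>z\<^sup>k f\<parallel>\<^sup>2 + |\<lambda>|\<^sup>2 \<parallel>f\<parallel>\<^sup>2 + 2 Re (\<lambda>\<^sup>* \<langle>z\<^sup>k f, f\<rangle>)\<close>, where \<open>z\<^sup>k f\<close> lies in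
  the space because \<open>\<omega>\<^sub>n\<^sub>+\<^sub>1 / \<omega>\<^sub>n\<close> is bounded. Up to bounded terms this differs from
  \<open>|\<lambda>|\<^sup>2\<close> by \<open>|\<lambda>|\<^sup>2 (\<parallel>f\<parallel>\<^sup>2 - 1) + 2 Re (\<lambda>\<^sup>* \<langle>z\<^sup>k f, f\<rangle>)\<close>, which is bounded in \<open>\<lambda>\<close> exactly
  when \<open>\<parallel>f\<parallel> = 1\<close> and \<open>\<langle>z\<^sup>k f, f\<rangle> = 0\<close>.
\<close>

lemma admissible_weight_pos: "admissible_weight \<omega> \<Longrightarrow> \<omega> n > 0"
  by (simp add: admissible_weight_def)

lemma admissible_weight_shift_le:
  assumes "admissible_weight \<omega>"
  obtains B where "B > 0" "\<And>n k. \<omega> (n + k) \<le> B ^ k * \<omega> n"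
proof -
  have "Bseq (\<lambda>n. \<omega> (Suc n) / \<omega> n)"
    using assms by (intro convergent_imp_Bseq) (auto simp: admissible_weight_def convergent_def)
  then obtain B where B: "B > 0" "\<And>n. norm (\<omega> (Suc n) / \<omega> n) \<le> B"
    by (auto simp: Bseq_def)
  have step: "\<omega> (Suc n) \<le> B * \<omega> n" for n
    using B(2)[of n] admissible_weight_pos[OF assms, of n] admissible_weight_pos[OF assms, of "Suc n"]
    by (simp add: divide_le_eq)
  have "\<omega> (n + k) \<le> B ^ k * \<omega> n" for n k
  proof (induction k)
    case 0
    then show ?case by simp
  next
    case (Suc k)
    have "\<omega> (n + Suc k) \<le> B * \<omega> (n + k)"
      using step[of "n + k"] by simp
    also have "\<dots> \<le> B * (B ^ k * \<omega> n)"
      using Suc B(1) by simp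
    finally show ?case
      by (simp add: algebra_simps)
  qed
  with B(1) show thesis by (rule that)
qed

lemma in_H2w_X_power_mult:
  assumes "admissible_weight \<omega>" "in_H2w \<omega> f"
  shows "in_H2w \<omega> (fps_X ^ k * f)"
proof -
  obtain B where B: "\<And>n k. \<omega> (n + k) \<le> B ^ k * \<omega> n"
    using admissible_weight_shift_le[OF assms(1)] by blast
  have "summable (\<lambda>n. B ^ k * (\<omega> n * (cmod (fps_nth f n))\<^sup>2))"
    using assms(2) by (intro summable_mult) (simp add: in_H2w_def)
  moreover have "norm (\<omega> (n + k) * (cmod (fps_nth f n))\<^sup>2) \<le> B ^ k * (\<omega> n * (cmod (fps_nth f n))\<^sup>2)" for n
    using mult_right_mono[OF B[of n k], of "(cmod (fps_nth f n))\<^sup>2"]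
      admissible_weight_pos[OF assms(1), of "n + k"] by simp
  ultimately have "summable (\<lambda>n. \<omega> (n + k) * (cmod (fps_nth f n))\<^sup>2)"
    by (rule summable_comparison_test'[where N = 0])
  then have "summable (\<lambda>n. \<omega> (n + k) * (cmod (fps_nth (fps_X ^ k * f) (n + k)))\<^sup>2)"
    by (simp add: fps_X_power_mult_nth)
  then show ?thesis
    unfolding in_H2w_def by (rule summable_iff_shift[THEN iffD1])
qed

lemma H2w_norm_squared:
  assumes "\<And>n. \<omega> n \<ge> 0" "in_H2w \<omega> f"
  shows "(H2w_norm \<omega> f)\<^sup>2 = (\<Sum>n. \<omega> n * (cmod (fps_nth f n))\<^sup>2)"
proof -
  have "0 \<le> (\<Sum>n. \<omega> n * (cmod (fps_nth f n))\<^sup>2)"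
    using assms by (intro suminf_nonneg) (auto simp: in_H2w_def)
  then show ?thesis
    by (simp add: H2w_norm_def)
qed

lemma H2w_inner_summable:
  assumes nonneg: "\<And>n. \<omega> n \<ge> 0" and "in_H2w \<omega> f" "in_H2w \<omega> g"
  shows "summable (\<lambda>n. complex_of_real (\<omega> n) * fps_nth f n * cnj (fps_nth g n))"
proof (rule summable_comparison_test'[where N = 0])
  show "summable (\<lambda>n. \<omega> n * ((cmod (fps_nth f n))\<^sup>2 + (cmod (fps_nth g n))\<^sup>2))"
    using assms(2,3) unfolding distrib_left by (intro summable_add) (simp_all add: in_H2w_def)
  fix n
  let ?a = "cmod (fps_nth f n)" and ?b = "cmod (fps_nth g n)"
  have "?a * ?b \<le> ?a\<^sup>2 + ?b\<^sup>2"
    using sum_squares_bound[of ?a ?b] mult_nonneg_nonneg[OF norm_ge_zero norm_ge_zero, of "fps_nth f n" "fps_nth g n"]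
    by linarith
  then have "\<omega> n * (?a * ?b) \<le> \<omega> n * (?a\<^sup>2 + ?b\<^sup>2)"
    by (rule mult_left_mono[OF _ nonneg])
  then show "norm (complex_of_real (\<omega> n) * fps_nth f n * cnj (fps_nth g n)) \<le> \<omega> n * (?a\<^sup>2 + ?b\<^sup>2)"
    using nonneg[of n] by (simp add: norm_mult mult.assoc)
qed

lemma cmod_add_mult_squared:
  "(cmod (a + c * b))\<^sup>2 = (cmod a)\<^sup>2 + (cmod c)\<^sup>2 * (cmod b)\<^sup>2 + 2 * Re (cnj c * (a * cnj b))"
proof -
  have "(cmod c)\<^sup>2 * (cmod b)\<^sup>2 = (cmod (c * b))\<^sup>2"
    by (simp add: norm_mult power_mult_distrib)
  then show ?thesis
    unfolding cmod_power2 by (simp add: power2_eq_square algebra_simps)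
qed

lemma H2w_norm_add_scaled_squared:
  assumes nonneg: "\<And>n. \<omega> n \<ge> 0" and f: "in_H2w \<omega> f" and g: "in_H2w \<omega> g"
  shows "(H2w_norm \<omega> (f + fps_const c * g))\<^sup>2
    = (H2w_norm \<omega> f)\<^sup>2 + (cmod c)\<^sup>2 * (H2w_norm \<omega> g)\<^sup>2 + 2 * Re (cnj c * H2w_inner \<omega> f g)"
proof -
  let ?F = "\<lambda>n. \<omega> n * (cmod (fps_nth f n))\<^sup>2" and ?G = "\<lambda>n. \<omega> n * (cmod (fps_nth g n))\<^sup>2"
    and ?I = "\<lambda>n. complex_of_real (\<omega> n) * fps_nth f n * cnj (fps_nth g n)"
  have pointwise: "\<omega> n * (cmod (fps_nth (f + fps_const c * g) n))\<^sup>2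
      = ?F n + (cmod c)\<^sup>2 * ?G n + 2 * Re (cnj c * ?I n)" for n
  proof -
    have "Re (cnj c * ?I n) = \<omega> n * Re (cnj c * (fps_nth f n * cnj (fps_nth g n)))"
      by (simp add: algebra_simps)
    then show ?thesis
      by (simp add: cmod_add_mult_squared algebra_simps)
  qed
  have "(\<lambda>n. ?F n + (cmod c)\<^sup>2 * ?G n + 2 * Re (cnj c * ?I n))
      sums (suminf ?F + (cmod c)\<^sup>2 * suminf ?G + 2 * Re (cnj c * suminf ?I))"
    using f g H2w_inner_summable[OF nonneg f g] unfolding in_H2w_def
    by (intro sums_add sums_mult sums_Re summable_sums) auto
  then have sums: "(\<lambda>n. \<omega> n * (cmod (fps_nth (f + fps_const c * g) n))\<^sup>2)
      sums (suminf ?F + (cmod c)\<^sup>2 * suminf ?G + 2 * Re (cnj c * suminf ?I))"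
    by (simp only: pointwise)
  then have "in_H2w \<omega> (f + fps_const c * g)"
    unfolding in_H2w_def by (rule sums_summable)
  with sums show ?thesis
    by (simp add: H2w_norm_squared nonneg f g sums_unique[symmetric] H2w_inner_def)
qed

lemma bounded_on_nonneg_scalings_eq_0:
  fixes b :: real
  assumes "\<And>t. t \<ge> 0 \<Longrightarrow> L \<le> t * b \<and> t * b \<le> U"
  shows "b = 0"
proof (rule ccontr)
  assume "b \<noteq> 0"
  then have "(\<bar>L\<bar> + \<bar>U\<bar> + 1) / \<bar>b\<bar> * b = (if b > 0 then 1 else -1) * (\<bar>L\<bar> + \<bar>U\<bar> + 1)"
    by auto
  with assms[of "(\<bar>L\<bar> + \<bar>U\<bar> + 1) / \<bar>b\<bar>"] show False
    by (auto split: if_splits)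
qed

text \<open>Comparing \<open>\<lambda>\<close> with \<open>-\<lambda>\<close> isolates the quadratic term; once its coefficient is known,
  \<open>\<lambda> = t I\<close> isolates the linear one.\<close>
lemma quadratic_within_bounds_iff:
  fixes A B :: real and I :: complex
  shows "(\<exists>C D. \<forall>c. D + (cmod c)\<^sup>2 \<le> A + (cmod c)\<^sup>2 * B + 2 * Re (cnj c * I) \<and>
                    A + (cmod c)\<^sup>2 * B + 2 * Re (cnj c * I) \<le> C + (cmod c)\<^sup>2)
     \<longleftrightarrow> B = 1 \<and> I = 0" (is "(\<exists>C D. \<forall>c. ?bounds C D c) \<longleftrightarrow> _")
proof
  assume "\<exists>C D. \<forall>c. ?bounds C D c"
  then obtain C D where bounds: "\<And>c. ?bounds C D c"
    by blast
  have "D - A \<le> t * (B - 1) \<and> t * (B - 1) \<le> C - A" if "t \<ge> 0" for t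
  proof -
    have "Re (cnj (- complex_of_real (sqrt t)) * I) = - Re (cnj (complex_of_real (sqrt t)) * I)"
      by simp
    then show ?thesis
      using bounds[of "complex_of_real (sqrt t)"] bounds[of "- complex_of_real (sqrt t)"] that
      by (auto simp: algebra_simps)
  qed
  then have B: "B = 1"
    by (rule bounded_on_nonneg_scalings_eq_0[of "D - A" "B - 1" "C - A", simplified])
  have "D - A \<le> t * (2 * (cmod I)\<^sup>2) \<and> t * (2 * (cmod I)\<^sup>2) \<le> C - A" for t
  proof -
    have "Re (cnj (complex_of_real t * I) * I) = t * (cmod I)\<^sup>2"
      by (simp only: cmod_power2) (simp add: power2_eq_square algebra_simps)
    then show ?thesis
      using bounds[of "complex_of_real t * I"] B by (auto simp: algebra_simps)
  qed
  then have "I = 0"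
    using bounded_on_nonneg_scalings_eq_0[of "D - A" "2 * (cmod I)\<^sup>2" "C - A"] by simp
  with B show "B = 1 \<and> I = 0" ..
next
  assume "B = 1 \<and> I = 0"
  then have "?bounds A A c" for c
    by simp
  then show "\<exists>C D. \<forall>c. ?bounds C D c"
    by blast
qed

theorem mainTheorem3:
  fixes \<omega> :: "nat \<Rightarrow> real" and f :: "complex fps"
  assumes "admissible_weight \<omega>" and "in_H2w \<omega> f"
  shows "H2w_inner_fn \<omega> f \<longleftrightarrow>
    (\<forall>k::nat. k \<ge> 1 \<longrightarrow> (\<exists>C D :: real. \<forall>c::complex.
       D + (cmod c)\<^sup>2 \<le> (H2w_norm \<omega> (f * (fps_X ^ k + fps_const c)))\<^sup>2 \<and>
       (H2w_norm \<omega> (f * (fps_X ^ k + fps_const c)))\<^sup>2 \<le> C + (cmod c)\<^sup>2))"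
proof -
  have nonneg: "\<And>n. \<omega> n \<ge> 0"
    using admissible_weight_pos[OF assms(1)] less_imp_le by blast
  have "(H2w_norm \<omega> (f * (fps_X ^ k + fps_const c)))\<^sup>2
      = (H2w_norm \<omega> (fps_X ^ k * f))\<^sup>2 + (cmod c)\<^sup>2 * (H2w_norm \<omega> f)\<^sup>2
        + 2 * Re (cnj c * H2w_inner \<omega> (fps_X ^ k * f) f)" for k c
    using H2w_norm_add_scaled_squared[OF nonneg in_H2w_X_power_mult[OF assms] assms(2)]
    by (simp add: algebra_simps)
  then have bounds_iff: "(\<exists>C D :: real. \<forall>c::complex.
       D + (cmod c)\<^sup>2 \<le> (H2w_norm \<omega> (f * (fps_X ^ k + fps_const c)))\<^sup>2 \<and>
       (H2w_norm \<omega> (f * (fps_X ^ k + fps_const c)))\<^sup>2 \<le> C + (cmod c)\<^sup>2)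
     \<longleftrightarrow> (H2w_norm \<omega> f)\<^sup>2 = 1 \<and> H2w_inner \<omega> (fps_X ^ k * f) f = 0" for k
    by (simp only: quadratic_within_bounds_iff)
  have "H2w_norm \<omega> f \<ge> 0"
    using assms(2) nonneg by (simp add: H2w_norm_def in_H2w_def suminf_nonneg)
  then have norm_iff: "(H2w_norm \<omega> f)\<^sup>2 = 1 \<longleftrightarrow> H2w_norm \<omega> f = 1"
    by (auto simp: power2_eq_1_iff)
  show ?thesis
    unfolding H2w_inner_fn_def bounds_iff norm_iff using order_refl[of "1::nat"] by blast
qed

end
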